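(* Let $\mathcal{D}$ be a distribution over $\mathcal{X}\times\mathcal{Y}$ where $\mathcal{Y}\subseteq\mathbb{R}^d$ and $\|y\|_\infty\le M$ for all $y\in\mathcal{Y}$, let $\alpha>0$, and let $\mathcal{T}$ be a bucketing with width $w=\sqrt{\alpha/M}$. Let $\pi:\mathcal{X}\to\Omega$ be an arbitrary policy and let $h:\mathcal{X}\to\mathcal{Y}$ be a model that is $\alpha$-consistent with respect to $\pi$. Then \[\left|\mathbb{E}_{\mathcal{D}}[\pi(x)\cdot h(x)]-\mathbb{E}_{\mathcal{D}}[\pi(x)\cdot y]\right|\le 2d\sqrt{\alpha M}.\]
   Context: $\Omega\subseteq[0,1]^d$ is an arbitrary (not necessarily convex) feasible set of actions; a policy is a map $\pi:\mathcal{X}\to\Omega$; a model is a map $h:\mathcal{X}\to\mathcal{Y}$. A bucketing $\mathcal{T}$ of width $w$ is a partition of $[0,1]$ into $1/w$ consecutive intervals ("buckets") $\tau$ of width $w$. A model $h$ is $\alpha$-consistent with respect to a collection of sets $\mathcal{C}\subseteq 2^{\mathcal{X}}$ if for every $C\in\mathcal{C}$, $\|\mathbb{E}_{\mathcal{D}}[y-h(x)\mid x\in C]\|_\infty\le \alpha/\Pr[x\in C]$. The level sets of a policy $\pi$ are $\mathcal{C}^{\mathcal{T}}_\pi=\{\{x:\pi(x)_i\in\tau\}: i\in[d],\tau\in\mathcal{T}\}$. A model $h$ is $\alpha$-consistent with respect to a policy $\pi$ if it is $\alpha$-consistent with respect to $\mathcal{C}^{\mathcal{T}}_\pi$. *)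

theory Defs
  imports "HOL-Probability.Probability"
begin

text \<open>A bucketing of width w: a partition of [0,1] into 1/w (nonempty, bounded) intervals,
  each of width w (pairwise disjoint intervals covering [0,1] are automatically consecutive).\<close>
definition bucketing :: "real set set \<Rightarrow> real \<Rightarrow> bool" where
  "bucketing T w \<longleftrightarrow> finite T \<and> real (card T) = 1 / w \<and> \<Union>T = {0..1} \<and> pairwise disjnt T \<and>
     (\<forall>\<tau>\<in>T. is_interval \<tau> \<and> \<tau> \<noteq> {} \<and> bounded \<tau> \<and> Sup \<tau> - Inf \<tau> = w)"

definition event_of :: "('x \<times> 'y) measure \<Rightarrow> 'x set \<Rightarrow> ('x \<times> 'y) set" where
  "event_of D C = {z \<in> space D. fst z \<in> C}"

definition cond_exp :: "('x \<times> 'y) measure \<Rightarrow> (('x \<times> 'y) \<Rightarrow> real) \<Rightarrow> 'x set \<Rightarrow> real" where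
  "cond_exp D f C = (\<integral>z. f z * indicator (event_of D C) z \<partial>D) / measure D (event_of D C)"

text \<open>alpha-consistency with respect to a collection of sets (sup-norm taken coordinatewise).\<close>
definition consistent_wrt :: "('x \<times> (real^'d)) measure \<Rightarrow> ('x \<Rightarrow> real^'d) \<Rightarrow> real \<Rightarrow> 'x set set \<Rightarrow> bool" where
  "consistent_wrt D h \<alpha> \<C> \<longleftrightarrow> (\<forall>C\<in>\<C>. \<forall>i.
      \<bar>cond_exp D (\<lambda>z. snd z $ i - h (fst z) $ i) C\<bar> \<le> \<alpha> / measure D (event_of D C))"

definition level_sets :: "('x \<Rightarrow> real^'d) \<Rightarrow> real set set \<Rightarrow> 'x set set" where
  "level_sets \<pi> T = {{x. \<pi> x $ i \<in> \<tau>} | i \<tau>. \<tau> \<in> T}"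

definition consistent_wrt_policy :: "('x \<times> (real^'d)) measure \<Rightarrow> ('x \<Rightarrow> real^'d) \<Rightarrow> real \<Rightarrow> ('x \<Rightarrow> real^'d) \<Rightarrow> real set set \<Rightarrow> bool" where
  "consistent_wrt_policy D h \<alpha> \<pi> T \<longleftrightarrow> consistent_wrt D h \<alpha> (level_sets \<pi> T)"

end

theory Submission
  imports Defs
begin

text \<open>Work one coordinate i at a time and split the expectation of \<open>\<pi>\<^sub>i (y\<^sub>i - h\<^sub>i)\<close>
  according to the bucket \<open>\<tau>\<close> containing \<open>\<pi>\<^sub>i\<close>. On that level set \<open>\<pi>\<^sub>i\<close> differs from the
  midpoint c of \<open>\<tau>\<close> by at most w/2, so the contribution of \<open>\<tau>\<close> is c times the bias of h on
  the level set, at most \<open>\<alpha>\<close> by consistency, plus an error of at most \<open>(w/2)\<cdot>2M\<cdot>Pr[\<tau>]\<close>.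
  Summing over the 1/w buckets gives \<open>\<alpha>/w + wM\<close>, which equals \<open>2\<surd>(\<alpha>M)\<close> for
  \<open>w = \<surd>(\<alpha>/M)\<close>; summing over the d coordinates gives the theorem.\<close>

lemma bucketing_width_pos:
  assumes "bucketing T w"
  shows "w > 0"
proof -
  have "finite T" "real (card T) = 1 / w" "\<Union>T = {0..1}"
    using assms unfolding bucketing_def by auto
  then have "T \<noteq> {}" and "card T > 0" by (auto simp: card_gt_0_iff)
  with \<open>real (card T) = 1 / w\<close> show ?thesis by (metis of_nat_0_less_iff zero_less_divide_1_iff)
qed

lemma bucketing_sets_borel:
  assumes "bucketing T w" and "\<tau> \<in> T"
  shows "\<tau> \<in> sets borel"
  using assms unfolding bucketing_def by (auto intro: real_interval_borel_measurable)

lemma bucketing_sum_indicator: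
  assumes "bucketing T w" and "t \<in> {0..1}"
  shows "(\<Sum>\<tau>\<in>T. indicator \<tau> t) = (1::real)"
proof -
  have "finite T" "\<Union>T = {0..1}" "disjoint T" using assms(1) unfolding bucketing_def by auto
  then have "indicator (\<Union>(id ` T)) t = (\<Sum>\<tau>\<in>T. indicator (id \<tau>) t :: real)"
    by (intro indicator_UN_disjoint disjoint_image_disjoint_family_on) auto
  with \<open>\<Union>T = {0..1}\<close> assms(2) show ?thesis by simp
qed

lemma bucketing_bucket_center:
  assumes "bucketing T w" and "\<tau> \<in> T"
  obtains c where "c \<in> {0..1}" and "\<And>t. t \<in> \<tau> \<Longrightarrow> \<bar>t - c\<bar> \<le> w / 2"
proof
  have "\<tau> \<noteq> {}" "bounded \<tau>" "Sup \<tau> - Inf \<tau> = w" "\<tau> \<subseteq> {0..1}"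
    using assms unfolding bucketing_def by auto
  then have "bdd_above \<tau>" "bdd_below \<tau>" "0 \<le> Inf \<tau>" "Sup \<tau> \<le> 1"
    by (auto intro!: bounded_imp_bdd_above bounded_imp_bdd_below cInf_greatest cSup_least)
  with \<open>Sup \<tau> - Inf \<tau> = w\<close> bucketing_width_pos[OF assms(1)]
  show "(Sup \<tau> + Inf \<tau>) / 2 \<in> {0..1}" by auto
  fix t assume "t \<in> \<tau>"
  with \<open>bdd_above \<tau>\<close> \<open>bdd_below \<tau>\<close> have "Inf \<tau> \<le> t" "t \<le> Sup \<tau>"
    by (auto intro: cInf_lower cSup_upper)
  with \<open>Sup \<tau> - Inf \<tau> = w\<close> show "\<bar>t - (Sup \<tau> + Inf \<tau>) / 2\<bar> \<le> w / 2"
    by (simp add: abs_le_iff field_simps)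
qed

lemma abs_integral_indicator_le_cond_exp:
  assumes "finite_measure D" and "event_of D C \<in> sets D" and "\<alpha> \<ge> 0"
    and "\<bar>cond_exp D f C\<bar> \<le> \<alpha> / measure D (event_of D C)"
  shows "\<bar>\<integral>z. f z * indicator (event_of D C) z \<partial>D\<bar> \<le> \<alpha>"
proof (cases "measure D (event_of D C) = 0")
  case True
  \<comment> \<open>the hypothesis degenerates to \<open>0 \<le> 0\<close> (division by zero); the event is null instead\<close>
  then have "AE z in D. z \<notin> event_of D C"
    using assms(1,2)
    by (intro AE_I[where N = "event_of D C"]) (auto simp: finite_measure.emeasure_eq_measure)
  then have "(\<integral>z. f z * indicator (event_of D C) z \<partial>D) = 0"
    by (intro integral_eq_zero_AE) (auto elim: AE_mp)
  with \<open>\<alpha> \<ge> 0\<close> show ?thesis by simp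
next
  case False
  then have "measure D (event_of D C) > 0" using measure_nonneg[of D] by (metis order_le_less)
  with assms(4) show ?thesis by (simp add: cond_exp_def abs_divide divide_le_cancel)
qed

lemma integrable_real_bounded:
  fixes f :: "'z \<Rightarrow> real"
  assumes "finite_measure D" and "f \<in> borel_measurable D" and "\<And>z. z \<in> space D \<Longrightarrow> \<bar>f z\<bar> \<le> B"
  shows "integrable D f"
  using assms by (intro finite_measure.integrable_const_bound[of D _ B]) auto

lemma abs_unit_interval_mult_le:
  fixes p t :: real
  assumes "p \<in> {0..1}" and "\<bar>t\<bar> \<le> B"
  shows "\<bar>p * t\<bar> \<le> B"
  using assms by (auto simp: abs_mult intro!: order_trans[OF mult_left_le_one_le])

lemma integral_eq_sum_buckets:
  fixes p f :: "'z \<Rightarrow> real"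
  assumes "finite_measure D" and T: "bucketing T w"
    and "p \<in> borel_measurable D" and p01: "\<And>z. z \<in> space D \<Longrightarrow> p z \<in> {0..1}"
    and "f \<in> borel_measurable D" and "\<And>z. z \<in> space D \<Longrightarrow> \<bar>f z\<bar> \<le> B"
  shows "(\<integral>z. f z \<partial>D) = (\<Sum>\<tau>\<in>T. \<integral>z. f z * indicator \<tau> (p z) \<partial>D)"
proof -
  have "(\<integral>z. f z \<partial>D) = (\<integral>z. (\<Sum>\<tau>\<in>T. f z * indicator \<tau> (p z)) \<partial>D)"
  proof (rule Bochner_Integration.integral_cong[OF refl])
    fix z assume "z \<in> space D"
    with bucketing_sum_indicator[OF T p01] show "f z = (\<Sum>\<tau>\<in>T. f z * indicator \<tau> (p z))"
      by (simp flip: sum_distrib_left)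
  qed
  also have "\<dots> = (\<Sum>\<tau>\<in>T. \<integral>z. f z * indicator \<tau> (p z) \<partial>D)"
  proof (rule Bochner_Integration.integral_sum)
    fix \<tau> assume "\<tau> \<in> T"
    with assms(1-6) bucketing_sets_borel[OF T] show "integrable D (\<lambda>z. f z * indicator \<tau> (p z))"
      by (intro integrable_real_bounded[of _ _ B]) (auto simp: indicator_def intro: order_trans[OF abs_ge_zero])
  qed
  finally show ?thesis .
qed

lemma abs_integral_bucket_le:
  fixes p g :: "'z \<Rightarrow> real"
  assumes "finite_measure D" and "\<tau> \<in> sets borel"
    and "p \<in> borel_measurable D" and "g \<in> borel_measurable D"
    and g_bound: "\<And>z. z \<in> space D \<Longrightarrow> \<bar>g z\<bar> \<le> G"
    and "\<bar>c\<bar> \<le> 1" and near_c: "\<And>t. t \<in> \<tau> \<Longrightarrow> \<bar>t - c\<bar> \<le> r"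
    and "\<bar>\<integral>z. g z * indicator \<tau> (p z) \<partial>D\<bar> \<le> \<alpha>"
  shows "\<bar>\<integral>z. p z * g z * indicator \<tau> (p z) \<partial>D\<bar> \<le> \<alpha> + r * G * (\<integral>z. indicator \<tau> (p z) \<partial>D)"
proof -
  have int_g: "integrable D (\<lambda>z. g z * indicator \<tau> (p z))"
    using assms(1-4) g_bound by (intro integrable_real_bounded[of _ _ G])
       (auto simp: indicator_def intro: order_trans[OF abs_ge_zero])
  have int_ind: "integrable D (\<lambda>z. indicator \<tau> (p z) :: real)"
    using assms(1-3) by (intro integrable_real_bounded[of _ _ 1]) (auto simp: indicator_def)
  have err: "\<bar>(p z - c) * g z * indicator \<tau> (p z)\<bar> \<le> r * G * indicator \<tau> (p z)"
    if "z \<in> space D" for z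
  proof (cases "p z \<in> \<tau>")
    case True
    then have "\<bar>p z - c\<bar> * \<bar>g z\<bar> \<le> r * G"
      using near_c[OF True] g_bound[OF that] by (intro mult_mono) auto
    with True show ?thesis by (simp add: abs_mult)
  qed simp
  have int_err: "integrable D (\<lambda>z. (p z - c) * g z * indicator \<tau> (p z))"
    using assms(1-4)
    by (intro integrable_real_bounded[of _ _ "\<bar>r * G\<bar>"] order_trans[OF err]) (auto simp: indicator_def)
  have split: "(\<integral>z. p z * g z * indicator \<tau> (p z) \<partial>D)
      = (\<integral>z. (p z - c) * g z * indicator \<tau> (p z) \<partial>D) + c * (\<integral>z. g z * indicator \<tau> (p z) \<partial>D)"
  proof -
    have "(\<integral>z. p z * g z * indicator \<tau> (p z) \<partial>D)
        = (\<integral>z. (p z - c) * g z * indicator \<tau> (p z) + c * (g z * indicator \<tau> (p z)) \<partial>D)"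
      by (simp add: algebra_simps)
    with int_err int_g show ?thesis by simp
  qed
  have "\<bar>\<integral>z. (p z - c) * g z * indicator \<tau> (p z) \<partial>D\<bar>
      \<le> (\<integral>z. \<bar>(p z - c) * g z * indicator \<tau> (p z)\<bar> \<partial>D)"
    by (rule integral_abs_bound)
  also have "\<dots> \<le> (\<integral>z. r * G * indicator \<tau> (p z) \<partial>D)"
    using int_err int_ind err by (intro integral_mono) auto
  finally have "\<bar>\<integral>z. (p z - c) * g z * indicator \<tau> (p z) \<partial>D\<bar>
      \<le> r * G * (\<integral>z. indicator \<tau> (p z) \<partial>D)"
    by simp
  moreover have "\<bar>c * (\<integral>z. g z * indicator \<tau> (p z) \<partial>D)\<bar> \<le> 1 * \<alpha>"
    unfolding abs_mult using assms(6,8) by (intro mult_mono) auto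
  ultimately show ?thesis unfolding split by linarith
qed

lemma abs_integral_mult_le_bucketing:
  fixes p g :: "'z \<Rightarrow> real"
  assumes "prob_space D" and T: "bucketing T w"
    and "p \<in> borel_measurable D" and p01: "\<And>z. z \<in> space D \<Longrightarrow> p z \<in> {0..1}"
    and "g \<in> borel_measurable D" and g_bound: "\<And>z. z \<in> space D \<Longrightarrow> \<bar>g z\<bar> \<le> G"
    and buckets: "\<And>\<tau>. \<tau> \<in> T \<Longrightarrow> \<bar>\<integral>z. g z * indicator \<tau> (p z) \<partial>D\<bar> \<le> \<alpha>"
  shows "\<bar>\<integral>z. p z * g z \<partial>D\<bar> \<le> \<alpha> * card T + w / 2 * G"
proof -
  interpret prob_space D by fact
  have bucket_bound: "\<bar>\<integral>z. p z * g z * indicator \<tau> (p z) \<partial>D\<bar>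
      \<le> \<alpha> + w / 2 * G * (\<integral>z. indicator \<tau> (p z) \<partial>D)" if \<tau>: "\<tau> \<in> T" for \<tau>
  proof -
    obtain c where "c \<in> {0..1}" "\<And>t. t \<in> \<tau> \<Longrightarrow> \<bar>t - c\<bar> \<le> w / 2"
      using bucketing_bucket_center[OF T \<tau>] by blast
    then show ?thesis
      using assms(3,5) g_bound bucketing_sets_borel[OF T \<tau>] buckets[OF \<tau>]
      by (intro abs_integral_bucket_le) (auto intro: finite_measure_axioms)
  qed
  have decompose: "(\<integral>z. p z * g z \<partial>D) = (\<Sum>\<tau>\<in>T. \<integral>z. p z * g z * indicator \<tau> (p z) \<partial>D)"
    using finite_measure_axioms T assms(3,5) p01 g_bound
    by (intro integral_eq_sum_buckets[where B = G] abs_unit_interval_mult_le) auto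
  have total: "(\<Sum>\<tau>\<in>T. \<integral>z. indicator \<tau> (p z) \<partial>D) = (1::real)"
    using integral_eq_sum_buckets[OF finite_measure_axioms T assms(3) p01, of "\<lambda>_. 1" 1]
    by (simp add: prob_space)
  have "\<bar>\<integral>z. p z * g z \<partial>D\<bar> \<le> (\<Sum>\<tau>\<in>T. \<bar>\<integral>z. p z * g z * indicator \<tau> (p z) \<partial>D\<bar>)"
    unfolding decompose by (rule sum_abs)
  also have "\<dots> \<le> (\<Sum>\<tau>\<in>T. \<alpha> + w / 2 * G * (\<integral>z. indicator \<tau> (p z) \<partial>D))"
    by (intro sum_mono bucket_bound)
  also have "\<dots> = \<alpha> * card T + w / 2 * G * (\<Sum>\<tau>\<in>T. \<integral>z. indicator \<tau> (p z) \<partial>D)"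
    by (simp add: sum.distrib sum_distrib_left)
  also have "\<dots> = \<alpha> * card T + w / 2 * G"
    using total by simp
  finally show ?thesis .
qed

lemma abs_integral_bucket_le_consistent_policy:
  assumes "finite_measure D" and "consistent_wrt_policy D h \<alpha> \<pi> T" and "\<alpha> \<ge> 0"
    and "(\<lambda>z. \<pi> (fst z) $ i) \<in> borel_measurable D" and "\<tau> \<in> T" and "\<tau> \<in> sets borel"
  shows "\<bar>\<integral>z. (snd z $ i - h (fst z) $ i) * indicator \<tau> (\<pi> (fst z) $ i) \<partial>D\<bar> \<le> \<alpha>"
proof -
  define C where "C = {x. \<pi> x $ i \<in> \<tau>}"
  have "C \<in> level_sets \<pi> T" unfolding C_def level_sets_def using \<open>\<tau> \<in> T\<close> by blast
  then have cond: "\<bar>cond_exp D (\<lambda>z. snd z $ i - h (fst z) $ i) C\<bar> \<le> \<alpha> / measure D (event_of D C)"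
    using assms(2) unfolding consistent_wrt_policy_def consistent_wrt_def by blast
  have event: "event_of D C = {z \<in> space D. \<pi> (fst z) $ i \<in> \<tau>}"
    unfolding event_of_def C_def by auto
  have event_sets: "event_of D C \<in> sets D" unfolding event using assms(4,6) by measurable
  have "(\<integral>z. (snd z $ i - h (fst z) $ i) * indicator (event_of D C) z \<partial>D)
      = (\<integral>z. (snd z $ i - h (fst z) $ i) * indicator \<tau> (\<pi> (fst z) $ i) \<partial>D)"
    by (rule Bochner_Integration.integral_cong[OF refl]) (simp add: event indicator_def)
  with abs_integral_indicator_le_cond_exp[OF assms(1) event_sets assms(3) cond] show ?thesis by simp
qed

lemma sqrt_quotient_balance:
  fixes \<alpha> M :: real
  assumes "\<alpha> > 0" and "M > 0"
  shows "\<alpha> / sqrt (\<alpha> / M) + sqrt (\<alpha> / M) * M = 2 * sqrt (\<alpha> * M)"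
proof -
  have "sqrt \<alpha> * sqrt \<alpha> = \<alpha>" "sqrt M * sqrt M = M" "sqrt \<alpha> > 0" "sqrt M > 0"
    using assms by auto
  then show ?thesis by (simp add: real_sqrt_divide real_sqrt_mult field_simps)
qed

lemma abs_integral_policy_residual_le:
  fixes D :: "('x \<times> (real^'d)) measure" and \<pi> h :: "'x \<Rightarrow> real^'d"
  assumes "prob_space D" and T: "bucketing T (sqrt (\<alpha> / M))" and "M > 0" and "\<alpha> > 0"
    and "consistent_wrt_policy D h \<alpha> \<pi> T"
    and \<pi>: "(\<lambda>z. \<pi> (fst z) $ i) \<in> borel_measurable D"
    and "(\<lambda>z. h (fst z) $ i) \<in> borel_measurable D" "(\<lambda>z. snd z $ i) \<in> borel_measurable D"
    and "\<And>x. \<pi> x $ i \<in> {0..1}"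
    and h_bound: "\<And>x. \<bar>h x $ i\<bar> \<le> M" and y_bound: "\<And>z. z \<in> space D \<Longrightarrow> \<bar>snd z $ i\<bar> \<le> M"
  shows "\<bar>\<integral>z. \<pi> (fst z) $ i * (snd z $ i - h (fst z) $ i) \<partial>D\<bar> \<le> 2 * sqrt (\<alpha> * M)"
proof -
  have "real (card T) = 1 / sqrt (\<alpha> / M)" using T unfolding bucketing_def by simp
  then have tradeoff: "\<alpha> * card T + sqrt (\<alpha> / M) / 2 * (2 * M) = 2 * sqrt (\<alpha> * M)"
    using sqrt_quotient_balance[OF assms(4,3)] by simp
  have "\<bar>\<integral>z. \<pi> (fst z) $ i * (snd z $ i - h (fst z) $ i) \<partial>D\<bar>
      \<le> \<alpha> * card T + sqrt (\<alpha> / M) / 2 * (2 * M)"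
  proof (rule abs_integral_mult_le_bucketing[OF assms(1) T,
        where p = "\<lambda>z. \<pi> (fst z) $ i" and g = "\<lambda>z. snd z $ i - h (fst z) $ i"])
    show "(\<lambda>z. snd z $ i - h (fst z) $ i) \<in> borel_measurable D"
      using assms(7,8) by measurable
    show "\<bar>snd z $ i - h (fst z) $ i\<bar> \<le> 2 * M" if "z \<in> space D" for z
      using y_bound[OF that] h_bound[of "fst z"] by linarith
    show "\<bar>\<integral>z. (snd z $ i - h (fst z) $ i) * indicator \<tau> (\<pi> (fst z) $ i) \<partial>D\<bar> \<le> \<alpha>"
      if "\<tau> \<in> T" for \<tau>
      using assms(1,4,5) \<pi> that bucketing_sets_borel[OF T that] unfolding prob_space_def
      by (intro abs_integral_bucket_le_consistent_policy) auto
  qed (use \<pi> assms(9) in auto)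
  with tradeoff show ?thesis by simp
qed

lemma integral_inner_diff_eq_sum:
  fixes u v v' :: "'z \<Rightarrow> real^'d"
  assumes "\<And>i. integrable D (\<lambda>z. u z $ i * v z $ i)"
    and "\<And>i. integrable D (\<lambda>z. u z $ i * v' z $ i)"
  shows "(\<integral>z. u z \<bullet> v z \<partial>D) - (\<integral>z. u z \<bullet> v' z \<partial>D)
    = (\<Sum>i\<in>UNIV. \<integral>z. u z $ i * (v z $ i - v' z $ i) \<partial>D)"
proof -
  have "(\<integral>z. u z \<bullet> v z \<partial>D) = (\<Sum>i\<in>UNIV. \<integral>z. u z $ i * v z $ i \<partial>D)"
    "(\<integral>z. u z \<bullet> v' z \<partial>D) = (\<Sum>i\<in>UNIV. \<integral>z. u z $ i * v' z $ i \<partial>D)"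
    unfolding inner_vec_def inner_real_def
    using assms by (simp_all add: Bochner_Integration.integral_sum)
  moreover have "(\<integral>z. u z $ i * v z $ i \<partial>D) - (\<integral>z. u z $ i * v' z $ i \<partial>D)
      = (\<integral>z. u z $ i * (v z $ i - v' z $ i) \<partial>D)" for i
    using Bochner_Integration.integral_diff[OF assms(1,2)] by (simp add: right_diff_distrib)
  ultimately show ?thesis by (simp flip: sum_subtractf)
qed

theorem lemma3:
  fixes D :: "('x \<times> (real^'d)) measure"
    and Y :: "(real^'d) set" and \<Omega> :: "(real^'d) set"
    and M \<alpha> :: real and T :: "real set set"
    and \<pi> h :: "'x \<Rightarrow> real^'d"
  assumes "prob_space D"
    and "\<forall>z\<in>space D. snd z \<in> Y"
    and "\<forall>y\<in>Y. \<forall>i. \<bar>y $ i\<bar> \<le> M"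
    and "M > 0" and "\<alpha> > 0"
    and "bucketing T (sqrt (\<alpha> / M))"
    and "\<Omega> \<subseteq> {v. \<forall>i. 0 \<le> v $ i \<and> v $ i \<le> 1}"
    and "\<forall>x. \<pi> x \<in> \<Omega>"
    and "\<forall>x. h x \<in> Y"
    and "(\<lambda>z. \<pi> (fst z)) \<in> borel_measurable D"
    and "(\<lambda>z. h (fst z)) \<in> borel_measurable D"
    and "snd \<in> borel_measurable D"
    and "consistent_wrt_policy D h \<alpha> \<pi> T"
  shows "\<bar>(\<integral>z. \<pi> (fst z) \<bullet> h (fst z) \<partial>D) - (\<integral>z. \<pi> (fst z) \<bullet> snd z \<partial>D)\<bar>
           \<le> 2 * real CARD('d) * sqrt (\<alpha> * M)"
proof -
  have finite: "finite_measure D" using assms(1) unfolding prob_space_def by blast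
  have measurable_coords: "(\<lambda>z. \<pi> (fst z) $ i) \<in> borel_measurable D"
    "(\<lambda>z. h (fst z) $ i) \<in> borel_measurable D" "(\<lambda>z. snd z $ i) \<in> borel_measurable D" for i
    using assms(10-12)[THEN measurable_compose, OF borel_measurable_nth] by simp_all
  have \<pi>01: "\<pi> x $ i \<in> {0..1}" for x i using assms(7,8) by auto
  have bounds: "\<bar>h x $ i\<bar> \<le> M" "z \<in> space D \<Longrightarrow> \<bar>snd z $ i\<bar> \<le> M" for x z i
    using assms(2,3,9) by auto
  have "(\<integral>z. \<pi> (fst z) \<bullet> snd z \<partial>D) - (\<integral>z. \<pi> (fst z) \<bullet> h (fst z) \<partial>D)
      = (\<Sum>i\<in>UNIV. \<integral>z. \<pi> (fst z) $ i * (snd z $ i - h (fst z) $ i) \<partial>D)"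
    using measurable_coords \<pi>01 bounds
    by (intro integral_inner_diff_eq_sum integrable_real_bounded[OF finite] abs_unit_interval_mult_le)
      auto
  then have "\<bar>(\<integral>z. \<pi> (fst z) \<bullet> h (fst z) \<partial>D) - (\<integral>z. \<pi> (fst z) \<bullet> snd z \<partial>D)\<bar>
      = \<bar>\<Sum>i\<in>UNIV. \<integral>z. \<pi> (fst z) $ i * (snd z $ i - h (fst z) $ i) \<partial>D\<bar>"
    by (simp add: abs_minus_commute)
  also have "\<dots> \<le> (\<Sum>i\<in>(UNIV :: 'd set). 2 * sqrt (\<alpha> * M))"
    using abs_integral_policy_residual_le[OF assms(1,6,4,5,13) measurable_coords \<pi>01 bounds]
    by (intro order_trans[OF sum_abs] sum_mono)
  finally show ?thesis by simp
qed

end
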